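(* Let $\mathcal X$ be finite with $N=|\mathcal X|\ge2$, let $c\in(0,1/N]$ and $0\le\varepsilon<\log\frac{2}{Nc}$. Then $$\sup_{K\in\mathcal M_1(\varepsilon,c)}\eta_{\mathrm{TV}}(K)=\frac{e^\varepsilon-1}{e^\varepsilon(1-Nc)+1},$$ moreover $\sup_{K\in\mathcal M_2(\varepsilon,c)}\eta_{\mathrm{TV}}(K)\le\sup_{K\in\mathcal M_1(\varepsilon,c)}\eta_{\mathrm{TV}}(K)$ (whenever $\mathcal M_2(\varepsilon,c)\neq\emptyset$), and $\mathcal M_0(\varepsilon,c)=\emptyset$.
   Context: A kernel $K$ is a row-stochastic matrix with entries $K_{Y|X=x}(y)$, $(K\circ P_X)(y)=\sum_xK_{Y|X=x}(y)P_X(x)$. PML: $\ell_{K\times P_X}(X\to y)=\log\frac{\max_x K_{Y|X=x}(y)}{(K\circ P_X)(y)}$ for full-support $P_X$ and $(K\circ P_X)(y)>0$. $\mathcal Q_{\mathcal X}(c)=\{P_X:\min_xP_X(x)\ge c\}$; $C(K,\mathcal P)=\sup_{P_X\in\mathcal P}\sup_{y:(K\circ P_X)(y)>0}\ell_{K\times P_X}(X\to y)$; $\mathcal M(\varepsilon,c)$ is the set of kernels with $C(K,\mathcal Q_{\mathcal X}(c))\le\varepsilon$. $\mathcal S_{N,2}$ denotes the $N\times 2$ row-stochastic matrices (kernels to a binary output set $\mathcal Y$). $\mathcal T_0=\{K\in\mathcal S_{N,2}:\forall y\in\mathcal Y\ \exists x\in\mathcal X,\ K_{Y|X=x}(y)=0\}$,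 $\mathcal T_1=\{K\in\mathcal S_{N,2}: K_{Y|X=x}(y)>0\ \forall x,y\}$. Define $\mathcal M_0(\varepsilon,c)=\mathcal M(\varepsilon,c)\cap\mathcal T_0$, $\mathcal M_1(\varepsilon,c)=\mathcal M(\varepsilon,c)\cap\mathcal T_1$, $\mathcal M_2(\varepsilon,c)=(\mathcal M(\varepsilon,c)\cap\mathcal S_{N,2})\setminus(\mathcal M_0(\varepsilon,c)\cup\mathcal M_1(\varepsilon,c))$. $\eta_{\mathrm{TV}}(K)=\max_{x\ne x'}\mathrm{TV}(K_{Y|X=x}\|K_{Y|X=x'})$. *)

theory Defs
  imports "HOL-Analysis.Analysis"
begin

text \<open>Kernels from a finite input type 'x to an output type 'y, as functions
  K x y = K_{Y|X=x}(y). Binary output sets are modelled by the type bool.\<close>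

definition stochastic :: "('x::finite \<Rightarrow> 'y::finite \<Rightarrow> real) \<Rightarrow> bool" where
  "stochastic K \<longleftrightarrow> (\<forall>x y. 0 \<le> K x y) \<and> (\<forall>x. (\<Sum>y\<in>UNIV. K x y) = 1)"

definition push :: "('x::finite \<Rightarrow> 'y \<Rightarrow> real) \<Rightarrow> ('x \<Rightarrow> real) \<Rightarrow> 'y \<Rightarrow> real" where
  "push K P y = (\<Sum>x\<in>UNIV. K x y * P x)"

definition pml :: "('x::finite \<Rightarrow> 'y \<Rightarrow> real) \<Rightarrow> ('x \<Rightarrow> real) \<Rightarrow> 'y \<Rightarrow> real" where
  "pml K P y = ln (Max (range (\<lambda>x. K x y)) / push K P y)"

definition pmfs :: "('x::finite \<Rightarrow> real) set" where
  "pmfs = {P. (\<forall>x. 0 \<le> P x) \<and> (\<Sum>x\<in>UNIV. P x) = 1}"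

definition Qset :: "real \<Rightarrow> ('x::finite \<Rightarrow> real) set" where
  "Qset c = {P \<in> pmfs. Min (range P) \<ge> c}"

definition Ccap :: "('x::finite \<Rightarrow> 'y \<Rightarrow> real) \<Rightarrow> ('x \<Rightarrow> real) set \<Rightarrow> ereal" where
  "Ccap K Ps = (SUP P\<in>Ps. SUP y\<in>{y. push K P y > 0}. ereal (pml K P y))"

definition Mset :: "real \<Rightarrow> real \<Rightarrow> ('x::finite \<Rightarrow> 'y::finite \<Rightarrow> real) set" where
  "Mset \<epsilon> c = {K. stochastic K \<and> Ccap K (Qset c) \<le> ereal \<epsilon>}"

definition S2 :: "('x::finite \<Rightarrow> bool \<Rightarrow> real) set" where
  "S2 = {K. stochastic K}"

definition T0 :: "('x::finite \<Rightarrow> bool \<Rightarrow> real) set" where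
  "T0 = {K \<in> S2. \<forall>y. \<exists>x. K x y = 0}"

definition T1 :: "('x::finite \<Rightarrow> bool \<Rightarrow> real) set" where
  "T1 = {K \<in> S2. \<forall>x y. K x y > 0}"

definition M0 :: "real \<Rightarrow> real \<Rightarrow> ('x::finite \<Rightarrow> bool \<Rightarrow> real) set" where
  "M0 \<epsilon> c = Mset \<epsilon> c \<inter> T0"

definition M1 :: "real \<Rightarrow> real \<Rightarrow> ('x::finite \<Rightarrow> bool \<Rightarrow> real) set" where
  "M1 \<epsilon> c = Mset \<epsilon> c \<inter> T1"

definition M2 :: "real \<Rightarrow> real \<Rightarrow> ('x::finite \<Rightarrow> bool \<Rightarrow> real) set" where
  "M2 \<epsilon> c = (Mset \<epsilon> c \<inter> S2) - (M0 \<epsilon> c \<union> M1 \<epsilon> c)"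

definition TV :: "('y::finite \<Rightarrow> real) \<Rightarrow> ('y \<Rightarrow> real) \<Rightarrow> real" where
  "TV p q = (1/2) * (\<Sum>y\<in>UNIV. \<bar>p y - q y\<bar>)"

definition eta_TV :: "('x::finite \<Rightarrow> 'y::finite \<Rightarrow> real) \<Rightarrow> real" where
  "eta_TV K = Max {TV (K x) (K x') | x x'. x \<noteq> x'}"

end

theory Submission
  imports Defs
begin

text \<open>
  For a binary-output kernel, the PML constraint at the vertex of \<open>Q(c)\<close> that puts mass
  \<open>1 - (N - 1) c\<close> on \<open>x'\<close> reads \<open>K(y|x) \<le> e\<^sup>\<epsilon> (c \<Sum>\<^sub>z K(y|z) + (1 - N c) K(y|x'))\<close>.
  Adding this inequality for output 1 at \<open>(x, x')\<close> and for output 0 at \<open>(x', x)\<close> eliminates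
  the column sums and gives \<open>(K(1|x) - K(1|x')) (1 + e\<^sup>\<epsilon> (1 - N c)) \<le> e\<^sup>\<epsilon> - 1\<close>, i.e.
  \<open>\<eta>\<^sub>T\<^sub>V(K) \<le> D\<close>. The bound is attained by the kernel whose rows at two inputs are
  \<open>((1 \<plusminus> D)/2, (1 \<mp> D)/2)\<close> and \<open>(1/2, 1/2)\<close> elsewhere: its column sums are \<open>N/2\<close>, so every
  \<open>P \<in> Q(c)\<close> pushes at least \<open>(1 - D)/2 (1 - N c) + c N/2\<close> onto each output, and the value
  of \<open>D\<close> makes \<open>e\<^sup>\<epsilon>\<close> times this exactly \<open>(1 + D)/2\<close>. A kernel in \<open>T\<^sub>0\<close> has two rows at
  total variation 1, impossible because \<open>\<epsilon> < log (2 / (N c))\<close> forces \<open>D < 1\<close>.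
\<close>

lemma sum_UNIV_bool: "(\<Sum>y\<in>UNIV. f y) = f True + (f False :: 'a::comm_monoid_add)"
  by (simp add: UNIV_bool add.commute)

lemma stochastic_bool_iff:
  "stochastic (K :: 'x::finite \<Rightarrow> bool \<Rightarrow> real) \<longleftrightarrow>
     (\<forall>x. 0 \<le> K x True \<and> 0 \<le> K x False \<and> K x True + K x False = 1)"
  unfolding stochastic_def sum_UNIV_bool by (metis (full_types))

lemma stochastic_bool_False:
  "stochastic (K :: 'x::finite \<Rightarrow> bool \<Rightarrow> real) \<Longrightarrow> K x False = 1 - K x True"
  unfolding stochastic_bool_iff by (metis add_diff_cancel_left')

lemma TV_bool:
  assumes "stochastic (K :: 'x::finite \<Rightarrow> bool \<Rightarrow> real)"
  shows "TV (K x) (K x') = \<bar>K x True - K x' True\<bar>"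
  using stochastic_bool_False[OF assms] by (simp add: TV_def sum_UNIV_bool abs_minus_commute)

lemma mem_Qset_iff:
  "P \<in> Qset c \<longleftrightarrow> (\<forall>x. 0 \<le> P x) \<and> (\<Sum>x\<in>UNIV. P x) = 1 \<and> (\<forall>x. c \<le> P x)"
  unfolding Qset_def pmfs_def by auto

lemma push_nonneg:
  assumes "\<And>x. 0 \<le> K x y" and "\<And>x. 0 \<le> P x"
  shows "0 \<le> push K P y"
  unfolding push_def using assms by (simp add: sum_nonneg)

lemma push_pos_iff:
  assumes "\<And>x. 0 \<le> K x y" and "\<And>x. 0 < P x"
  shows "0 < push K P y \<longleftrightarrow> (\<exists>x. 0 < K x y)"
proof
  assume "0 < push K P y"
  show "\<exists>x. 0 < K x y"
  proof (rule ccontr)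
    assume "\<nexists>x. 0 < K x y"
    then have "K x y = 0" for x using assms(1) by (simp add: not_less order.antisym)
    then show False using \<open>0 < push K P y\<close> by (simp add: push_def)
  qed
next
  assume "\<exists>x. 0 < K x y"
  then obtain x where "0 < K x y" by blast
  then show "0 < push K P y"
    unfolding push_def using assms by (intro sum_pos2[of UNIV x]) (simp_all add: less_imp_le)
qed

lemma pml_le_iff:
  assumes "\<And>x. 0 \<le> K x y" and "\<And>x. 0 < P x" and "0 < push K P y"
  shows "pml K P y \<le> \<epsilon> \<longleftrightarrow> (\<forall>x. K x y \<le> exp \<epsilon> * push K P y)"
proof -
  let ?M = "Max (range (\<lambda>x. K x y))"
  obtain x where "0 < K x y" using push_pos_iff[of K y P, OF assms(1,2)] assms(3) by blast
  also have "K x y \<le> ?M" by (rule Max_ge) auto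
  finally have "0 < ?M / push K P y" using assms(3) by simp
  then have "pml K P y \<le> \<epsilon> \<longleftrightarrow> ln (?M / push K P y) \<le> ln (exp \<epsilon>)"
    by (simp add: pml_def)
  also have "\<dots> \<longleftrightarrow> ?M / push K P y \<le> exp \<epsilon>"
    using \<open>0 < ?M / push K P y\<close> by (rule ln_le_cancel_iff) simp
  also have "\<dots> \<longleftrightarrow> ?M \<le> exp \<epsilon> * push K P y"
    using assms(3) by (simp add: pos_divide_le_eq mult.commute)
  also have "\<dots> \<longleftrightarrow> (\<forall>x. K x y \<le> exp \<epsilon> * push K P y)"
    by (simp add: Max_le_iff)
  finally show ?thesis .
qed

lemma Ccap_Qset_le_iff:
  fixes K :: "'x::finite \<Rightarrow> 'y \<Rightarrow> real"
  assumes K: "\<And>x y. 0 \<le> K x y" and "0 < c"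
  shows "Ccap K (Qset c) \<le> ereal \<epsilon> \<longleftrightarrow> (\<forall>P\<in>Qset c. \<forall>x y. K x y \<le> exp \<epsilon> * push K P y)"
proof -
  have pointwise: "(0 < push K P y \<longrightarrow> pml K P y \<le> \<epsilon>) \<longleftrightarrow> (\<forall>x. K x y \<le> exp \<epsilon> * push K P y)"
    if "P \<in> Qset c" for P y
  proof -
    have P: "\<And>x. 0 < P x" using that \<open>0 < c\<close> unfolding mem_Qset_iff by (meson less_le_trans)
    show ?thesis
    proof (cases "0 < push K P y")
      case True
      then show ?thesis using pml_le_iff[of K y P, OF K P] by simp
    next
      case False
      then have "K x y \<le> 0" for x using push_pos_iff[of K y P, OF K P] by (auto simp: not_less)
      moreover have "0 \<le> push K P y" using K P by (simp add: push_nonneg less_imp_le)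
      ultimately have "K x y \<le> exp \<epsilon> * push K P y" for x
        by (meson order_trans exp_ge_zero mult_nonneg_nonneg)
      then show ?thesis using False by blast
    qed
  qed
  have "Ccap K (Qset c) \<le> ereal \<epsilon> \<longleftrightarrow> (\<forall>P\<in>Qset c. \<forall>y. 0 < push K P y \<longrightarrow> pml K P y \<le> \<epsilon>)"
    by (simp add: Ccap_def SUP_le_iff)
  also have "\<dots> \<longleftrightarrow> (\<forall>P\<in>Qset c. \<forall>x y. K x y \<le> exp \<epsilon> * push K P y)"
    by (intro ball_cong refl) (simp add: pointwise, blast)
  finally show ?thesis .
qed

definition Qset_vertex :: "real \<Rightarrow> 'x::finite \<Rightarrow> 'x \<Rightarrow> real" where
  "Qset_vertex c x' x = c + (if x = x' then 1 - real CARD('x) * c else 0)"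

lemma Qset_vertex_in_Qset:
  assumes "0 \<le> c" and "real CARD('x::finite) * c \<le> 1"
  shows "Qset_vertex c (x'::'x) \<in> Qset c"
  using assms unfolding mem_Qset_iff Qset_vertex_def by (simp add: sum.distrib)

lemma push_Qset_vertex:
  "push K (Qset_vertex c x') y
     = c * (\<Sum>x\<in>UNIV. K x y) + (1 - real CARD('x::finite) * c) * K (x'::'x) y"
proof -
  have "(\<lambda>x. K x y * Qset_vertex c x' x)
      = (\<lambda>x. c * K x y + (if x = x' then (1 - real CARD('x) * c) * K x' y else 0))"
    by (auto simp: Qset_vertex_def algebra_simps)
  then show ?thesis unfolding push_def by (simp only:) (simp add: sum.distrib sum_distrib_left)
qed

lemma push_ge_of_Qset:
  fixes K :: "'x::finite \<Rightarrow> 'y \<Rightarrow> real"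
  assumes "P \<in> Qset c" and "\<And>x. a \<le> K x y"
  shows "a * (1 - real CARD('x) * c) + c * (\<Sum>x\<in>UNIV. K x y) \<le> push K P y"
proof -
  have P: "\<And>x. c \<le> P x" "(\<Sum>x\<in>UNIV. P x) = 1" using assms(1) by (auto simp: mem_Qset_iff)
  have "a * (1 - real CARD('x) * c) = (\<Sum>x\<in>UNIV. a * (P x - c))"
    by (simp add: sum_distrib_left[symmetric] sum_subtractf P(2))
  also have "\<dots> \<le> (\<Sum>x\<in>UNIV. K x y * (P x - c))"
    using assms(2) P(1) by (intro sum_mono mult_right_mono) auto
  finally show ?thesis
    unfolding push_def by (simp add: algebra_simps sum_subtractf sum_distrib_left)
qed

definition eta_TV_bound :: "real \<Rightarrow> real \<Rightarrow> real \<Rightarrow> real" where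
  "eta_TV_bound \<epsilon> c n = (exp \<epsilon> - 1) / (exp \<epsilon> * (1 - n * c) + 1)"

lemma eta_TV_bound_mult_eq:
  assumes "n * c \<le> 1"
  shows "eta_TV_bound \<epsilon> c n * (exp \<epsilon> * (1 - n * c) + 1) = exp \<epsilon> - 1"
proof -
  have "0 < exp \<epsilon> * (1 - n * c) + 1" using assms by (simp add: add_nonneg_pos)
  then show ?thesis by (simp add: eta_TV_bound_def)
qed

lemma eta_TV_bound_nonneg:
  "0 \<le> \<epsilon> \<Longrightarrow> n * c \<le> 1 \<Longrightarrow> 0 \<le> eta_TV_bound \<epsilon> c n"
  unfolding eta_TV_bound_def by (simp add: add_nonneg_pos)

lemma eta_TV_bound_less_1:
  assumes "0 < n * c" and "n * c \<le> 1" and "\<epsilon> < ln (2 / (n * c))"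
  shows "eta_TV_bound \<epsilon> c n < 1"
proof -
  have "exp \<epsilon> < 2 / (n * c)"
    using assms(1,3) by (metis divide_pos_pos exp_less_cancel_iff exp_ln zero_less_numeral)
  then have "exp \<epsilon> - 1 < exp \<epsilon> * (1 - n * c) + 1"
    using assms(1) by (simp add: less_divide_eq algebra_simps)
  moreover have "0 < exp \<epsilon> * (1 - n * c) + 1" using assms(2) by (simp add: add_nonneg_pos)
  ultimately show ?thesis by (simp add: eta_TV_bound_def)
qed

lemma Mset_bool_row_diff_le:
  fixes K :: "'x::finite \<Rightarrow> bool \<Rightarrow> real"
  assumes "K \<in> Mset \<epsilon> c" and "0 < c" and "real CARD('x) * c \<le> 1"
  shows "(K x True - K x' True) * (exp \<epsilon> * (1 - real CARD('x) * c) + 1) \<le> exp \<epsilon> - 1"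
proof -
  let ?N = "real CARD('x)" and ?S = "\<Sum>z\<in>UNIV. K z True"
  have st: "stochastic K" and C: "Ccap K (Qset c) \<le> ereal \<epsilon>"
    using assms(1) by (auto simp: Mset_def)
  have K0: "\<And>x y. 0 \<le> K x y" using st by (simp add: stochastic_def)
  have vertex: "K z y \<le> exp \<epsilon> * (c * (\<Sum>x\<in>UNIV. K x y) + (1 - ?N * c) * K z' y)" for z z' y
    using C Qset_vertex_in_Qset[OF less_imp_le[OF assms(2)] assms(3), of z']
    unfolding Ccap_Qset_le_iff[OF K0 assms(2)] push_Qset_vertex[symmetric] by blast
  have "(\<Sum>z\<in>UNIV. K z False) = ?N - ?S"
    using stochastic_bool_False[OF st] by (simp add: sum_subtractf)
  then have "1 - K x' True \<le> exp \<epsilon> * (c * (?N - ?S) + (1 - ?N * c) * (1 - K x True))"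
    using vertex[of x' False x] stochastic_bool_False[OF st] by simp
  moreover have "K x True \<le> exp \<epsilon> * (c * ?S + (1 - ?N * c) * K x' True)"
    by (rule vertex)
  ultimately show ?thesis by (simp add: algebra_simps)
qed

lemma Mset_TV_le:
  fixes K :: "'x::finite \<Rightarrow> bool \<Rightarrow> real"
  assumes "K \<in> Mset \<epsilon> c" and "0 < c" and "real CARD('x) * c \<le> 1"
  shows "TV (K x) (K x') \<le> eta_TV_bound \<epsilon> c (real CARD('x))"
proof -
  let ?d = "exp \<epsilon> * (1 - real CARD('x) * c) + 1"
  have "0 < ?d" using assms(3) by (simp add: add_nonneg_pos)
  have "\<bar>K x True - K x' True\<bar> * ?d \<le> exp \<epsilon> - 1"
    using Mset_bool_row_diff_le[OF assms, of x x'] Mset_bool_row_diff_le[OF assms, of x' x]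
    by (simp add: abs_if)
  then show ?thesis
    using \<open>0 < ?d\<close> assms(1) by (simp add: TV_bool Mset_def eta_TV_bound_def pos_le_divide_eq)
qed

lemma finite_TV_pairs:
  "finite {TV (K x) (K x') | x x'. x \<noteq> (x'::'x::finite)}"
proof -
  have "{TV (K x) (K x') | x x'. x \<noteq> x'} \<subseteq> (\<lambda>(x, x'). TV (K x) (K x')) ` UNIV" by auto
  then show ?thesis by (rule finite_subset) simp
qed

lemma TV_le_eta_TV:
  "x \<noteq> x' \<Longrightarrow> TV (K x) (K x') \<le> eta_TV (K :: 'x::finite \<Rightarrow> 'y::finite \<Rightarrow> real)"
  unfolding eta_TV_def by (rule Max_ge[OF finite_TV_pairs]) blast

lemma CARD_ge_2_ex_distinct: "2 \<le> CARD('x::finite) \<Longrightarrow> \<exists>x x' :: 'x. x \<noteq> x'"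
  using card_le_Suc0_iff_eq[of "UNIV :: 'x set"] by fastforce

lemma eta_TV_le:
  fixes K :: "'x::finite \<Rightarrow> 'y::finite \<Rightarrow> real"
  assumes "2 \<le> CARD('x)" and "\<And>x x'. x \<noteq> x' \<Longrightarrow> TV (K x) (K x') \<le> b"
  shows "eta_TV K \<le> b"
proof -
  obtain x x' :: 'x where "x \<noteq> x'" using CARD_ge_2_ex_distinct[OF assms(1)] by blast
  then have "{TV (K x) (K x') | x x'. x \<noteq> x'} \<noteq> {}" by blast
  then show ?thesis
    unfolding eta_TV_def using assms(2) by (auto simp: Max_le_iff[OF finite_TV_pairs])
qed

lemma M0_eq_empty:
  assumes "0 < c" and "real CARD('x::finite) * c \<le> 1" and "\<epsilon> < ln (2 / (real CARD('x) * c))"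
  shows "(M0 \<epsilon> c :: ('x \<Rightarrow> bool \<Rightarrow> real) set) = {}"
proof (rule equals0I)
  fix K :: "'x \<Rightarrow> bool \<Rightarrow> real"
  assume "K \<in> M0 \<epsilon> c"
  then have K: "K \<in> Mset \<epsilon> c" "stochastic K" and "\<forall>y. \<exists>x. K x y = 0"
    by (auto simp: M0_def T0_def S2_def Mset_def)
  then obtain x0 x1 where "K x0 True = 0" and "K x1 False = 0" by blast
  then have "1 = TV (K x1) (K x0)"
    using stochastic_bool_False[OF K(2), of x1] by (simp add: TV_bool[OF K(2)])
  also have "\<dots> \<le> eta_TV_bound \<epsilon> c (real CARD('x))"
    using K(1) assms(1,2) by (rule Mset_TV_le)
  also have "\<dots> < 1"
    using assms by (intro eta_TV_bound_less_1) simp_all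
  finally show False by simp
qed

lemma in_Mset_if_entries_between:
  fixes K :: "'x::finite \<Rightarrow> 'y::finite \<Rightarrow> real"
  assumes "stochastic K" and "0 < c"
    and lower: "\<And>x y. a \<le> K x y" and upper: "\<And>x y. K x y \<le> b"
    and "\<And>y. b \<le> exp \<epsilon> * (a * (1 - real CARD('x) * c) + c * (\<Sum>x\<in>UNIV. K x y))"
  shows "K \<in> Mset \<epsilon> c"
proof -
  have "K x y \<le> exp \<epsilon> * push K P y" if "P \<in> Qset c" for P x y
  proof -
    have "K x y \<le> exp \<epsilon> * (a * (1 - real CARD('x) * c) + c * (\<Sum>x\<in>UNIV. K x y))"
      using upper assms(5) by (rule order_trans)
    also have "\<dots> \<le> exp \<epsilon> * push K P y"
      using push_ge_of_Qset[of P c a K y, OF that lower] by simp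
    finally show ?thesis .
  qed
  moreover have "\<And>x y. 0 \<le> K x y" using assms(1) by (simp add: stochastic_def)
  ultimately show ?thesis
    using assms(1,2) by (simp add: Mset_def Ccap_Qset_le_iff)
qed

definition extremal_kernel :: "real \<Rightarrow> 'x \<Rightarrow> 'x \<Rightarrow> 'x \<Rightarrow> bool \<Rightarrow> real" where
  "extremal_kernel D x0 x1 x y =
     1 / 2 + (if y then 1 else - 1) * ((if x = x1 then D / 2 else 0) - (if x = x0 then D / 2 else 0))"

lemma extremal_kernel_bounds:
  assumes "0 \<le> D"
  shows "(1 - D) / 2 \<le> extremal_kernel D x0 x1 x y" and "extremal_kernel D x0 x1 x y \<le> (1 + D) / 2"
  using assms by (auto simp: extremal_kernel_def)

lemma stochastic_extremal_kernel:
  assumes "0 \<le> D" and "D \<le> 1"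
  shows "stochastic (extremal_kernel D x0 (x1::'x::finite))"
  using assms by (simp add: stochastic_bool_iff extremal_kernel_def)

lemma sum_extremal_kernel:
  fixes x0 x1 :: "'x::finite"
  shows "(\<Sum>x\<in>UNIV. extremal_kernel D x0 x1 x y) = real CARD('x) / 2"
  by (simp add: extremal_kernel_def sum.distrib sum_subtractf flip: sum_distrib_left)

lemma TV_extremal_kernel:
  assumes "x0 \<noteq> x1" and "0 \<le> D"
  shows "TV (extremal_kernel D x0 x1 x1) (extremal_kernel D x0 x1 x0) = D"
  using assms by (simp add: TV_def sum_UNIV_bool extremal_kernel_def)

lemma M1_attains_eta_TV_bound:
  assumes "2 \<le> CARD('x::finite)" and "0 < c" and "real CARD('x) * c \<le> 1"
    and "0 \<le> \<epsilon>" and "\<epsilon> < ln (2 / (real CARD('x) * c))"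
  obtains W :: "'x::finite \<Rightarrow> bool \<Rightarrow> real"
  where "W \<in> M1 \<epsilon> c" and "eta_TV_bound \<epsilon> c (real CARD('x)) \<le> eta_TV W"
proof -
  let ?N = "real CARD('x)"
  define D where "D = eta_TV_bound \<epsilon> c ?N"
  have "0 \<le> D" using assms(3,4) by (simp add: D_def eta_TV_bound_nonneg)
  have "D < 1" using assms(2,3,5) by (simp add: D_def eta_TV_bound_less_1)
  obtain x0 x1 :: 'x where "x0 \<noteq> x1" using CARD_ge_2_ex_distinct[OF assms(1)] by blast
  define W where "W = extremal_kernel D x0 x1"
  note bounds = extremal_kernel_bounds[OF \<open>0 \<le> D\<close>, of x0 x1, folded W_def]
  have st: "stochastic W"
    unfolding W_def using \<open>0 \<le> D\<close> \<open>D < 1\<close> by (simp add: stochastic_extremal_kernel)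
  have tight: "(1 + D) / 2 = exp \<epsilon> * ((1 - D) / 2 * (1 - ?N * c) + c * (?N / 2))"
    using eta_TV_bound_mult_eq[OF assms(3), of \<epsilon>] unfolding D_def[symmetric]
    by (simp add: field_simps)
  have "W \<in> Mset \<epsilon> c"
    by (rule in_Mset_if_entries_between[OF st assms(2) bounds])
      (simp only: W_def sum_extremal_kernel tight[symmetric] order_refl)
  moreover have "0 < W x y" for x y
    using \<open>D < 1\<close> by (intro less_le_trans[OF _ bounds(1)]) simp
  ultimately have "W \<in> M1 \<epsilon> c"
    using st by (simp add: M1_def T1_def S2_def)
  moreover have "D \<le> eta_TV W"
    using TV_le_eta_TV[of x1 x0 W] TV_extremal_kernel[OF \<open>x0 \<noteq> x1\<close> \<open>0 \<le> D\<close>] \<open>x0 \<noteq> x1\<close>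
    by (simp add: W_def)
  ultimately show ?thesis using that D_def by blast
qed

theorem theorem3:
  fixes c \<epsilon> :: real
  assumes "CARD('x::finite) \<ge> 2"
    and "0 < c" and "c \<le> 1 / real CARD('x)"
    and "0 \<le> \<epsilon>" and "\<epsilon> < ln (2 / (real CARD('x) * c))"
  shows "(SUP K\<in>(M1 \<epsilon> c :: ('x \<Rightarrow> bool \<Rightarrow> real) set). eta_TV K)
           = (exp \<epsilon> - 1) / (exp \<epsilon> * (1 - real CARD('x) * c) + 1)
         \<and> ((M2 \<epsilon> c :: ('x \<Rightarrow> bool \<Rightarrow> real) set) \<noteq> {} \<longrightarrow>
           (SUP K\<in>(M2 \<epsilon> c :: ('x \<Rightarrow> bool \<Rightarrow> real) set). eta_TV K)
             \<le> (SUP K\<in>(M1 \<epsilon> c :: ('x \<Rightarrow> bool \<Rightarrow> real) set). eta_TV K))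
         \<and> (M0 \<epsilon> c :: ('x \<Rightarrow> bool \<Rightarrow> real) set) = {}"
proof -
  let ?D = "eta_TV_bound \<epsilon> c (real CARD('x))"
  have Nc: "real CARD('x) * c \<le> 1" using assms(3) by (simp add: field_simps)
  have Mset_le: "eta_TV K \<le> ?D" if "K \<in> Mset \<epsilon> c" for K :: "'x \<Rightarrow> bool \<Rightarrow> real"
    using assms(1) Mset_TV_le[OF that assms(2) Nc] by (rule eta_TV_le)
  obtain W :: "'x \<Rightarrow> bool \<Rightarrow> real" where W: "W \<in> M1 \<epsilon> c" "?D \<le> eta_TV W"
    using M1_attains_eta_TV_bound[OF assms(1,2) Nc assms(4,5)] .
  have "eta_TV W = ?D" using W Mset_le[of W] by (simp add: M1_def)
  then have "?D \<in> eta_TV ` (M1 \<epsilon> c :: ('x \<Rightarrow> bool \<Rightarrow> real) set)"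
    using W(1) by (metis image_eqI)
  then have M1: "(SUP K\<in>(M1 \<epsilon> c :: ('x \<Rightarrow> bool \<Rightarrow> real) set). eta_TV K) = ?D"
    using Mset_le by (intro cSup_eq_maximum) (auto simp: M1_def)
  have "(SUP K\<in>(M2 \<epsilon> c :: ('x \<Rightarrow> bool \<Rightarrow> real) set). eta_TV K) \<le> ?D"
    if "(M2 \<epsilon> c :: ('x \<Rightarrow> bool \<Rightarrow> real) set) \<noteq> {}"
    using that Mset_le by (auto simp: M2_def intro!: cSUP_least)
  then show ?thesis
    using M1 M0_eq_empty[OF assms(2) Nc assms(5)] by (simp add: eta_TV_bound_def)
qed

end
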